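(* Let $G$ be a connected graph and $K\subseteq V(G)$ a nonempty set of vertices inducing a clique in $G$. Let $G_K$ be obtained from $G$ by adding a new vertex $x$ with $N_{G_K}(x)=K$. For each search tree $T$ on $G$ let $P^x(T)=\{T(i,x,v_{\lambda(T)}) \mid i\in\{0,\ldots,\lambda(T)+1\}\}$. Then $\{P^x(T)\mid T\in V(\mathcal{R}(G))\}$ is a partition of $V(\mathcal{R}(G_K))$.
   Context: For a connected graph $G$, a search tree on $G$ is a rooted tree with vertex set $V(G)$ defined recursively: its root is some vertex $r\in V(G)$, and the children of $r$ are the roots of search trees on the connected components of $G-r$. The rotation graph $\mathcal{R}(G)$ has the search trees on $G$ as vertices (adjacency given by rotations; only its vertex set matters here). For a rooted tree $T$ with root $r_T$ and $w\in V(T)$, $d_{T,w}$ is the distance from $r_T$ to $w$ in $T$. For a search tree $T$ on $G$, all vertices of the clique $K$ lie on a common root-to-leaf path; $\lambda(T)=\max\{d_{T,u}\mid u\in K\}$ and $v_{\lambda(T)}$ is the unique vertex of $K$ with $d_{T,v_{\lambda(T)}}=\lambda(T)$. Insertion: for a rooted tree $T$, a vertex $v\in V(T)$ with $d=d_{T,v}$, root-to-$v$ path $r_T=a_0,a_1,\ldots,a_d=v$, and a new vertex $x\notin V(T)$, the rooted tree $T(i,x,v)$ on $V(T)\cup\{x\}$ is: for $i=0$, $x$ is the new root with $T$ as its only subtree; for $1\le i\le d$, the edge $a_{i-1}a_i$ is subdivided by $x$ (root unchanged); for $i=d+1$, $x$ is added as a new leaf child of $v$. *)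

theory Defs
  imports Main "HOL-Library.Disjoint_Sets"
begin

text \<open>Rooted trees: pairs (r, P) of a root r and a set P of (parent, child) edges;
  the vertex set is {r} together with all vertices in P.\<close>

type_synonym 'a rtree = "'a \<times> ('a \<times> 'a) set"

definition graph :: "'a set \<Rightarrow> ('a \<Rightarrow> 'a \<Rightarrow> bool) \<Rightarrow> bool" where
  "graph V E \<longleftrightarrow> finite V \<and> (\<forall>u v. E u v \<longrightarrow> u \<in> V \<and> v \<in> V \<and> E v u \<and> u \<noteq> v)"

definition reach :: "('a \<Rightarrow> 'a \<Rightarrow> bool) \<Rightarrow> 'a set \<Rightarrow> 'a \<Rightarrow> 'a \<Rightarrow> bool" where
  "reach E S u v \<longleftrightarrow> (u, v) \<in> {(a, b). a \<in> S \<and> b \<in> S \<and> E a b}\<^sup>*"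

definition connected_graph :: "('a \<Rightarrow> 'a \<Rightarrow> bool) \<Rightarrow> 'a set \<Rightarrow> bool" where
  "connected_graph E S \<longleftrightarrow> S \<noteq> {} \<and> (\<forall>u\<in>S. \<forall>v\<in>S. reach E S u v)"

definition components :: "('a \<Rightarrow> 'a \<Rightarrow> bool) \<Rightarrow> 'a set \<Rightarrow> 'a set set" where
  "components E S = {{v \<in> S. reach E S u v} | u. u \<in> S}"

inductive search_tree :: "('a \<Rightarrow> 'a \<Rightarrow> bool) \<Rightarrow> 'a set \<Rightarrow> 'a \<Rightarrow> ('a \<times> 'a) set \<Rightarrow> bool"
  for E where
  "\<lbrakk> r \<in> V; connected_graph E V;
     \<forall>C \<in> components E (V - {r}). search_tree E C (rt C) (Pt C);
     P = (\<Union>C \<in> components E (V - {r}). insert (r, rt C) (Pt C)) \<rbrakk>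
   \<Longrightarrow> search_tree E V r P"

definition search_trees :: "'a set \<Rightarrow> ('a \<Rightarrow> 'a \<Rightarrow> bool) \<Rightarrow> 'a rtree set" where
  "search_trees V E = {(r, P). search_tree E V r P}"

text \<open>Distance from the root to w in the rooted tree with edge set P
  (= number of proper ancestors of w).\<close>
definition depth :: "('a \<times> 'a) set \<Rightarrow> 'a \<Rightarrow> nat" where
  "depth P w = card {a. (a, w) \<in> P\<^sup>+}"

definition anc_at :: "('a \<times> 'a) set \<Rightarrow> 'a \<Rightarrow> nat \<Rightarrow> 'a" where
  "anc_at P v j = (THE a. (a, v) \<in> P\<^sup>* \<and> depth P a = j)"

definition ins :: "'a rtree \<Rightarrow> nat \<Rightarrow> 'a \<Rightarrow> 'a \<Rightarrow> 'a rtree" where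
  "ins T i x v = (case T of (r, P) \<Rightarrow>
     if i = 0 then (x, insert (x, r) P)
     else if i \<le> depth P v then
       (r, (P - {(anc_at P v (i - 1), anc_at P v i)})
            \<union> {(anc_at P v (i - 1), x), (x, anc_at P v i)})
     else (r, insert (v, x) P))"

definition lam :: "'a set \<Rightarrow> 'a rtree \<Rightarrow> nat" where
  "lam K T = Max (depth (snd T) ` K)"

definition v_lam :: "'a set \<Rightarrow> 'a rtree \<Rightarrow> 'a" where
  "v_lam K T = (THE u. u \<in> K \<and> depth (snd T) u = lam K T)"

definition Px :: "'a set \<Rightarrow> 'a \<Rightarrow> 'a rtree \<Rightarrow> 'a rtree set" where
  "Px K x T = {ins T i x (v_lam K T) | i. i \<le> lam K T + 1}"

definition add_vertex_edges :: "('a \<Rightarrow> 'a \<Rightarrow> bool) \<Rightarrow> 'a set \<Rightarrow> 'a \<Rightarrow> 'a \<Rightarrow> 'a \<Rightarrow> bool" where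
  "add_vertex_edges E K x u v \<longleftrightarrow> E u v \<or> (u = x \<and> v \<in> K) \<or> (v = x \<and> u \<in> K)"

end

(*
  Adjacent vertices of a search tree are comparable, so the clique K lies on one root path,
  with a lowest vertex v; this is the vertex v_lambda(T).  Inserting x on the path from the
  root to v gives a search tree on G_K, by induction along the recursive definition: x
  either becomes the new root, or, being adjacent only to K, it joins exactly the component
  of G - r that meets K, and one recurses there; if v = r, then K meets no such component
  and x becomes a leaf below r.  The same case analysis of the root of a search tree on G_K
  shows that every such tree is an insertion.  Contracting x away undoes each insertion, so
  the sets P^x(T) are pairwise disjoint.
*)
theory Submission
  imports Defs
begin

lemma reach_refl [simp]: "reach E S u u"
  by (simp add: reach_def)

lemma reach_trans: "reach E S u v \<Longrightarrow> reach E S v w \<Longrightarrow> reach E S u w"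
  unfolding reach_def by (rule rtrancl_trans)

lemma reach_sym:
  assumes "symp E" and "reach E S u v"
  shows "reach E S v u"
proof -
  have "sym {(a, b). a \<in> S \<and> b \<in> S \<and> E a b}"
    using assms(1) by (auto simp: sym_def dest: sympD)
  then show ?thesis
    using assms(2) sym_rtrancl unfolding reach_def by (blast dest: symD)
qed

lemma reach_in: "reach E S u v \<Longrightarrow> u \<in> S \<Longrightarrow> v \<in> S"
  unfolding reach_def by (induction rule: rtrancl_induct) auto

lemma reach_edge: "u \<in> S \<Longrightarrow> v \<in> S \<Longrightarrow> E u v \<Longrightarrow> reach E S u v"
  unfolding reach_def by auto

lemma reach_mono:
  assumes "reach E S u v" and "S \<subseteq> S'" and "\<And>a b. a \<in> S \<Longrightarrow> b \<in> S \<Longrightarrow> E a b \<Longrightarrow> E' a b"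
  shows "reach E' S' u v"
proof -
  have "{(a, b). a \<in> S \<and> b \<in> S \<and> E a b} \<subseteq> {(a, b). a \<in> S' \<and> b \<in> S' \<and> E' a b}"
    using assms(2,3) by auto
  then show ?thesis
    using assms(1) rtrancl_mono unfolding reach_def by blast
qed

lemma reach_cong:
  assumes "\<And>a b. a \<in> S \<Longrightarrow> b \<in> S \<Longrightarrow> E a b = E' a b"
  shows "reach E S = reach E' S"
  using reach_mono[of E S _ _ S E'] reach_mono[of E' S _ _ S E] assms by (intro ext iffI) auto

abbreviation component_of :: "('a \<Rightarrow> 'a \<Rightarrow> bool) \<Rightarrow> 'a set \<Rightarrow> 'a \<Rightarrow> 'a set" where
  "component_of E S u \<equiv> {v \<in> S. reach E S u v}"

lemma components_eq_image: "components E S = component_of E S ` S"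
  unfolding components_def by blast

lemma component_of_in_components: "u \<in> S \<Longrightarrow> component_of E S u \<in> components E S"
  unfolding components_def by auto

lemma components_subset: "C \<in> components E S \<Longrightarrow> C \<subseteq> S"
  unfolding components_def by auto

lemma components_nonempty: "C \<in> components E S \<Longrightarrow> C \<noteq> {}"
  unfolding components_def by auto

lemma Union_components: "\<Union>(components E S) = S"
proof
  show "\<Union>(components E S) \<subseteq> S"
    using components_subset by blast
  show "S \<subseteq> \<Union>(components E S)"
    by (auto intro!: UnionI[OF component_of_in_components])
qed

lemma components_of_connected: "connected_graph E S \<Longrightarrow> components E S = {S}"
  unfolding connected_graph_def components_def by auto

lemma component_of_eq:
  assumes "symp E" and "reach E S u w"
  shows "component_of E S w = component_of E S u"
  using reach_trans[OF assms(2)] reach_trans[OF reach_sym[OF assms]] by blast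

lemma components_eq_component_of:
  assumes "symp E" and "C \<in> components E S" and "w \<in> C"
  shows "C = component_of E S w"
  using assms component_of_eq[OF assms(1)] unfolding components_def by auto

lemma disjoint_components:
  assumes "symp E"
  shows "disjoint (components E S)"
proof (rule disjointI)
  fix C D
  assume "C \<in> components E S" and "D \<in> components E S" and "C \<noteq> D"
  then show "C \<inter> D = {}"
    using components_eq_component_of[OF assms] by blast
qed

lemma search_tree_cong:
  assumes "search_tree E S r P" and "\<forall>a\<in>S. \<forall>b\<in>S. E a b = E' a b"
  shows "search_tree E' S r P"
  using assms
proof (induct rule: search_tree.induct)
  case (1 r S rt Pt P)
  have reach_eq: "reach E T = reach E' T" if "T \<subseteq> S" for T
    by (rule reach_cong) (use 1(5) that in blast)
  then have components_eq: "components E (S - {r}) = components E' (S - {r})"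
    unfolding components_def by auto
  have "connected_graph E' S"
    using 1(2) reach_eq[of S] unfolding connected_graph_def by auto
  moreover have "search_tree E' C (rt C) (Pt C)" if "C \<in> components E' (S - {r})" for C
  proof -
    have "C \<subseteq> S"
      using that components_subset by blast
    then show ?thesis
      using 1(3,5) that unfolding components_eq by blast
  qed
  ultimately show ?case
    using search_tree.intros[of r S E' rt Pt P] 1(1,4) components_eq by simp
qed

definition rooted_at :: "'a set \<Rightarrow> 'a \<Rightarrow> ('a \<times> 'a) set \<Rightarrow> bool" where
  "rooted_at S r P \<longleftrightarrow> r \<in> S \<and> P \<subseteq> S \<times> S \<and> (\<forall>w\<in>S. (r, w) \<in> P\<^sup>*) \<and> (\<forall>a. (a, r) \<notin> P)"

lemma rtrancl_source_in:
  assumes "(a, b) \<in> P\<^sup>*" and "P \<subseteq> S \<times> S" and "b \<in> S"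
  shows "a \<in> S"
  using assms by (induction rule: converse_rtrancl_induct) auto

lemma ancestors_subset: "P \<subseteq> S \<times> S \<Longrightarrow> {a. (a, w) \<in> P\<^sup>+} \<subseteq> S"
  using trancl_subset_Sigma by blast

lemma rooted_at_root_in: "rooted_at S r P \<Longrightarrow> r \<in> S"
  and rooted_at_edges_within: "rooted_at S r P \<Longrightarrow> P \<subseteq> S \<times> S"
  and rooted_at_reaches: "rooted_at S r P \<Longrightarrow> w \<in> S \<Longrightarrow> (r, w) \<in> P\<^sup>*"
  and rooted_at_no_edge_into_root: "rooted_at S r P \<Longrightarrow> (a, r) \<notin> P"
  unfolding rooted_at_def by auto

lemma rooted_at_trancl_in: "rooted_at S r P \<Longrightarrow> (a, b) \<in> P\<^sup>+ \<Longrightarrow> a \<in> S \<and> b \<in> S"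
  using trancl_subset_Sigma[OF rooted_at_edges_within] by (metis mem_Sigma_iff subsetD)

lemma finite_ancestors: "P \<subseteq> S \<times> S \<Longrightarrow> finite S \<Longrightarrow> finite {a. (a, w) \<in> P\<^sup>+}"
  using finite_subset[OF ancestors_subset] .

lemma rooted_at_no_path_into_root: "rooted_at S r P \<Longrightarrow> (a, r) \<notin> P\<^sup>+"
  by (meson rooted_at_no_edge_into_root tranclE)

lemma rooted_at_depth_root:
  assumes "rooted_at S r P"
  shows "depth P r = 0"
proof -
  have "{a. (a, r) \<in> P\<^sup>+} = {}"
    using rooted_at_no_path_into_root[OF assms] by blast
  then show ?thesis
    unfolding depth_def by simp
qed

lemma rooted_at_singleton: "rooted_at {a} r P \<longleftrightarrow> r = a \<and> P = {}"
  unfolding rooted_at_def by auto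

lemma rooted_at_anc_at_0:
  assumes rooted: "rooted_at S r P" and "finite S" and "w \<in> S"
  shows "anc_at P w 0 = r"
  unfolding anc_at_def
proof (rule the_equality)
  show "(r, w) \<in> P\<^sup>* \<and> depth P r = 0"
    using rooted_at_depth_root[OF rooted] rooted_at_reaches[OF rooted \<open>w \<in> S\<close>] by blast
next
  fix a
  assume a: "(a, w) \<in> P\<^sup>* \<and> depth P a = 0"
  have P_sub: "P \<subseteq> S \<times> S"
    using rooted_at_edges_within[OF rooted] .
  show "a = r"
  proof (rule ccontr)
    assume "a \<noteq> r"
    have "a \<in> S"
      using a rtrancl_source_in[OF _ P_sub \<open>w \<in> S\<close>] by blast
    then have "(r, a) \<in> P\<^sup>+"
      using rooted_at_reaches[OF rooted] \<open>a \<noteq> r\<close> rtranclD by metis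
    moreover have "finite {b. (b, a) \<in> P\<^sup>+}"
      using finite_ancestors[OF P_sub \<open>finite S\<close>] .
    ultimately have "depth P a \<noteq> 0"
      unfolding depth_def using card_0_eq by blast
    then show False
      using a by simp
  qed
qed

lemma depth_less:
  assumes "acyclic P" and "finite {a. (a, u) \<in> P\<^sup>+}" and "(v, u) \<in> P\<^sup>+"
  shows "depth P v < depth P u"
proof -
  have "insert v {a. (a, v) \<in> P\<^sup>+} \<subseteq> {a. (a, u) \<in> P\<^sup>+}"
    using assms(3) by (auto intro: trancl_trans)
  moreover have "v \<notin> {a. (a, v) \<in> P\<^sup>+}"
    using assms(1) unfolding acyclic_def by blast
  ultimately show ?thesis
    unfolding depth_def using assms(2) card_mono finite_subset
    by (metis (no_types, lifting) card_insert_disjoint finite_insert Suc_le_lessD)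
qed

locale root_split =
  fixes CS :: "'a set set" and r :: 'a
    and rt :: "'a set \<Rightarrow> 'a" and Pt :: "'a set \<Rightarrow> ('a \<times> 'a) set" and P :: "('a \<times> 'a) set"
  assumes disjoint_parts: "disjoint CS"
    and root_notin_parts: "r \<notin> \<Union>CS"
    and rooted_parts: "C \<in> CS \<Longrightarrow> rooted_at C (rt C) (Pt C)"
    and edges_eq: "P = (\<Union>C\<in>CS. insert (r, rt C) (Pt C))"
begin

lemma part_edges_subset: "C \<in> CS \<Longrightarrow> Pt C \<subseteq> P"
  and root_edge: "C \<in> CS \<Longrightarrow> (r, rt C) \<in> P"
  unfolding edges_eq by auto

lemma part_edges_within: "C \<in> CS \<Longrightarrow> Pt C \<subseteq> C \<times> C"
  and part_root_in: "C \<in> CS \<Longrightarrow> rt C \<in> C"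
  and root_notin_part: "C \<in> CS \<Longrightarrow> r \<notin> C"
  using rooted_at_edges_within[OF rooted_parts] rooted_at_root_in[OF rooted_parts] root_notin_parts
  by auto

lemma edge_into_part:
  assumes "(a, b) \<in> P" and "C \<in> CS" and "b \<in> C"
  shows "a = r \<or> (a, b) \<in> Pt C"
proof -
  obtain D where D: "D \<in> CS" "(a, b) \<in> insert (r, rt D) (Pt D)"
    using assms(1) unfolding edges_eq by blast
  then have "b \<in> D"
    using part_edges_within part_root_in by blast
  then have "D = C"
    using disjoint_parts D(1) assms(2,3) by (auto dest: disjointD)
  then show ?thesis
    using D(2) by blast
qed

lemma no_edge_into_root: "(a, r) \<notin> P"
  using part_edges_within root_notin_part part_root_in unfolding edges_eq by blast

lemma rooted: "rooted_at (insert r (\<Union>CS)) r P"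
  unfolding rooted_at_def
proof (intro conjI ballI allI)
  show "P \<subseteq> insert r (\<Union>CS) \<times> insert r (\<Union>CS)"
    unfolding edges_eq using part_edges_within part_root_in by blast
  fix w
  assume "w \<in> insert r (\<Union>CS)"
  then consider "w = r" | C where "C \<in> CS" "w \<in> C"
    by blast
  then show "(r, w) \<in> P\<^sup>*"
  proof cases
    case 2
    then have "(rt C, w) \<in> P\<^sup>*"
      using rooted_at_reaches[OF rooted_parts] part_edges_subset rtrancl_mono by blast
    then show ?thesis
      by (rule converse_rtrancl_into_rtrancl[OF root_edge[OF 2(1)]])
  qed simp
qed (use no_edge_into_root in auto)

lemma trancl_into_part_iff:
  assumes C: "C \<in> CS" and "w \<in> C"
  shows "(a, w) \<in> P\<^sup>+ \<longleftrightarrow> a = r \<or> (a, w) \<in> (Pt C)\<^sup>+"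
proof
  assume "(a, w) \<in> P\<^sup>+"
  then show "a = r \<or> (a, w) \<in> (Pt C)\<^sup>+"
    using \<open>w \<in> C\<close>
  proof (induction rule: trancl_induct)
    case (base b)
    then show ?case
      using edge_into_part[OF _ C] by blast
  next
    case (step y z)
    have "y \<noteq> r"
      using step(1) rooted_at_no_path_into_root[OF rooted] by blast
    then have "(y, z) \<in> Pt C"
      using edge_into_part[OF step(2) C step(4)] by blast
    then show ?case
      using step(3) part_edges_within[OF C] by (auto intro: trancl_into_trancl)
  qed
next
  assume "a = r \<or> (a, w) \<in> (Pt C)\<^sup>+"
  then show "(a, w) \<in> P\<^sup>+"
  proof
    assume "a = r"
    have "(rt C, w) \<in> P\<^sup>*"
      using rooted_at_reaches[OF rooted_parts[OF C] \<open>w \<in> C\<close>]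
        rtrancl_mono[OF part_edges_subset[OF C]] by blast
    then show ?thesis
      using root_edge[OF C] \<open>a = r\<close> by (simp add: rtrancl_into_trancl2)
  qed (use trancl_mono part_edges_subset[OF C] in blast)
qed

lemma rtrancl_into_part_iff:
  assumes "C \<in> CS" and "w \<in> C"
  shows "(a, w) \<in> P\<^sup>* \<longleftrightarrow> a = r \<or> (a, w) \<in> (Pt C)\<^sup>*"
  using trancl_into_part_iff[OF assms] root_notin_part[OF assms(1)] assms(2)
  by (auto simp: rtrancl_eq_or_trancl)

lemma depth_part:
  assumes C: "C \<in> CS" and "finite C" and "w \<in> C"
  shows "depth P w = Suc (depth (Pt C) w)"
proof -
  have "{a. (a, w) \<in> P\<^sup>+} = insert r {a. (a, w) \<in> (Pt C)\<^sup>+}"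
    using trancl_into_part_iff[OF C \<open>w \<in> C\<close>] by auto
  moreover have "{a. (a, w) \<in> (Pt C)\<^sup>+} \<subseteq> C"
    using ancestors_subset[OF part_edges_within[OF C]] .
  ultimately show ?thesis
    unfolding depth_def using \<open>finite C\<close> root_notin_part[OF C]
    by (metis (no_types, lifting) card_insert_disjoint finite_subset subsetD)
qed

lemma anc_at_part:
  assumes C: "C \<in> CS" and "finite C" and "w \<in> C"
  shows "anc_at P w (Suc j) = anc_at (Pt C) w j"
proof -
  have "(a, w) \<in> P\<^sup>* \<and> depth P a = Suc j \<longleftrightarrow> (a, w) \<in> (Pt C)\<^sup>* \<and> depth (Pt C) a = j" for a
  proof (cases "a = r")
    case True
    then show ?thesis
      using rtrancl_source_in[OF _ part_edges_within[OF C] \<open>w \<in> C\<close>] root_notin_part[OF C]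
        rooted_at_depth_root[OF rooted] by auto
  next
    case False
    then show ?thesis
      using rtrancl_into_part_iff[OF C \<open>w \<in> C\<close>] depth_part[OF C \<open>finite C\<close>]
        rtrancl_source_in[OF _ part_edges_within[OF C] \<open>w \<in> C\<close>] by auto
  qed
  then show ?thesis
    unfolding anc_at_def by simp
qed

lemma anc_at_0_part:
  assumes C: "C \<in> CS" and "finite C" and "w \<in> C"
  shows "anc_at P w 0 = r"
  unfolding anc_at_def
proof (rule the_equality)
  show "(r, w) \<in> P\<^sup>* \<and> depth P r = 0"
    using rtrancl_into_part_iff[OF C \<open>w \<in> C\<close>] rooted_at_depth_root[OF rooted] by simp
next
  fix a
  assume a: "(a, w) \<in> P\<^sup>* \<and> depth P a = 0"
  show "a = r"
  proof (rule ccontr)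
    assume "a \<noteq> r"
    then have "a \<in> C"
      using a rtrancl_into_part_iff[OF C \<open>w \<in> C\<close>]
        rtrancl_source_in[OF _ part_edges_within[OF C] \<open>w \<in> C\<close>] by blast
    then show False
      using a depth_part[OF C \<open>finite C\<close>] by simp
  qed
qed

end

lemma insert_root_Union_components: "r \<in> S \<Longrightarrow> insert r (\<Union>(components E (S - {r}))) = S"
  using Union_components[of E "S - {r}"] by auto

lemma root_split_components:
  assumes "symp E" and "\<forall>C\<in>components E (S - {r}). rooted_at C (rt C) (Pt C)"
    and "P = (\<Union>C\<in>components E (S - {r}). insert (r, rt C) (Pt C))"
  shows "root_split (components E (S - {r})) r rt Pt P"
  using assms disjoint_components[OF assms(1)] components_subset by unfold_locales blast+

lemma search_tree_rooted_at:
  assumes "search_tree E S r P" and "symp E"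
  shows "rooted_at S r P"
  using assms(1)
proof (induct rule: search_tree.induct)
  case (1 r S rt Pt P)
  interpret root_split "components E (S - {r})" r rt Pt P
    using root_split_components[OF assms(2)] 1(3,4) by blast
  show ?case
    using rooted 1(1) insert_root_Union_components by metis
qed

lemma root_split_search_trees:
  assumes "symp E" and "\<forall>C\<in>components E (S - {r}). search_tree E C (rt C) (Pt C)"
    and "P = (\<Union>C\<in>components E (S - {r}). insert (r, rt C) (Pt C))"
  shows "root_split (components E (S - {r})) r rt Pt P"
  using root_split_components[OF assms(1) _ assms(3)] search_tree_rooted_at[OF _ assms(1)] assms(2)
  by blast

lemma search_tree_connected: "search_tree E S r P \<Longrightarrow> connected_graph E S"
  by (erule search_tree.cases) simp

lemma search_tree_acyclic:
  assumes "search_tree E S r P" and "symp E"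
  shows "acyclic P"
  using assms(1)
proof (induct rule: search_tree.induct)
  case (1 r S rt Pt P)
  interpret root_split "components E (S - {r})" r rt Pt P
    using root_split_search_trees[OF assms(2)] 1(3,4) by blast
  show ?case
    unfolding acyclic_def
  proof
    fix w
    show "(w, w) \<notin> P\<^sup>+"
    proof
      assume cycle: "(w, w) \<in> P\<^sup>+"
      then have "w \<noteq> r"
        using rooted_at_no_path_into_root[OF rooted, of w] by auto
      moreover have "w \<in> insert r (\<Union>(components E (S - {r})))"
        using rooted_at_trancl_in[OF rooted cycle] by blast
      ultimately obtain C where C: "C \<in> components E (S - {r})" and "w \<in> C"
        by blast
      then have "(w, w) \<in> (Pt C)\<^sup>+"
        using cycle trancl_into_part_iff \<open>w \<noteq> r\<close> by blast
      moreover have "acyclic (Pt C)"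
        using 1(3) C by blast
      ultimately show False
        unfolding acyclic_def by blast
    qed
  qed
qed

lemma search_tree_depth_less:
  assumes "search_tree E S r P" and "symp E" and "finite S" and "(v, u) \<in> P\<^sup>+"
  shows "depth P v < depth P u"
proof (rule depth_less[OF search_tree_acyclic[OF assms(1,2)] _ assms(4)])
  show "finite {a. (a, u) \<in> P\<^sup>+}"
    using finite_ancestors[OF rooted_at_edges_within[OF search_tree_rooted_at[OF assms(1,2)]] assms(3)] .
qed

lemma search_tree_adjacent_comparable:
  assumes "search_tree E S r P" and "symp E" and "u \<in> S" and "v \<in> S" and "E u v"
  shows "(u, v) \<in> P\<^sup>* \<or> (v, u) \<in> P\<^sup>*"
  using assms(1,3-5)
proof (induct arbitrary: u v rule: search_tree.induct)
  case (1 r S rt Pt P u v)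
  interpret root_split "components E (S - {r})" r rt Pt P
    using root_split_search_trees[OF assms(2)] 1(3,4) by blast
  show ?case
  proof (cases "u = r \<or> v = r")
    case True
    have "rooted_at S r P"
      using rooted 1(1) insert_root_Union_components by metis
    then show ?thesis
      using rooted_at_reaches 1(5,6) True by metis
  next
    case False
    let ?C = "component_of E (S - {r}) u"
    have C: "?C \<in> components E (S - {r})"
      using component_of_in_components[of u "S - {r}" E] False 1(5) by simp
    have "u \<in> ?C" and "v \<in> ?C"
      using reach_edge[of u "S - {r}" v E] 1(5-7) False by auto
    moreover have "\<forall>u\<in>?C. \<forall>v\<in>?C. E u v \<longrightarrow> (u, v) \<in> (Pt ?C)\<^sup>* \<or> (v, u) \<in> (Pt ?C)\<^sup>*"
      using 1(3) C by simp
    ultimately have "(u, v) \<in> (Pt ?C)\<^sup>* \<or> (v, u) \<in> (Pt ?C)\<^sup>*"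
      using 1(7) by simp
    then show ?thesis
      using rtrancl_mono[OF part_edges_subset[OF C]] by auto
  qed
qed

lemma search_tree_path_edge:
  assumes "search_tree E S r P" and "symp E" and "finite S" and "w \<in> S" and "j < depth P w"
  shows "(anc_at P w j, anc_at P w (Suc j)) \<in> P"
  using assms(1,3-5)
proof (induct arbitrary: w j rule: search_tree.induct)
  case (1 r S rt Pt P w j)
  interpret root_split "components E (S - {r})" r rt Pt P
    using root_split_search_trees[OF assms(2)] 1(3,4) by blast
  have "w \<noteq> r"
    using 1(7) rooted_at_depth_root[OF rooted] by auto
  then obtain C where C: "C \<in> components E (S - {r})" and "w \<in> C"
    using 1(6) Union_components[of E "S - {r}"] by blast
  have "finite C"
    using components_subset[OF C] 1(5) finite_subset by blast
  note anc_at_C = anc_at_part[OF C \<open>finite C\<close> \<open>w \<in> C\<close>]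
  show ?case
  proof (cases j)
    case 0
    have "anc_at P w 0 = r"
      using anc_at_0_part[OF C \<open>finite C\<close> \<open>w \<in> C\<close>] .
    moreover have "anc_at (Pt C) w 0 = rt C"
      using rooted_at_anc_at_0[OF rooted_parts[OF C] \<open>finite C\<close> \<open>w \<in> C\<close>] .
    ultimately show ?thesis
      using 0 anc_at_C root_edge[OF C] by simp
  next
    case (Suc k)
    have "k < depth (Pt C) w"
      using 1(7) Suc depth_part[OF C \<open>finite C\<close> \<open>w \<in> C\<close>] by simp
    then have "(anc_at (Pt C) w k, anc_at (Pt C) w (Suc k)) \<in> Pt C"
      using 1(3) C \<open>finite C\<close> \<open>w \<in> C\<close> by blast
    then show ?thesis
      using Suc anc_at_C part_edges_subset[OF C] by auto
  qed
qed

definition lowest_in :: "('a \<times> 'a) set \<Rightarrow> 'a set \<Rightarrow> 'a \<Rightarrow> bool" where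
  "lowest_in P A v \<longleftrightarrow> v \<in> A \<and> (\<forall>u\<in>A. (u, v) \<in> P\<^sup>*)"

lemma search_tree_clique_has_lowest:
  assumes "search_tree E S r P" and "symp E" and "finite S"
    and "A \<subseteq> S" and "A \<noteq> {}" and clique: "\<forall>u\<in>A. \<forall>v\<in>A. u \<noteq> v \<longrightarrow> E u v"
  obtains v where "lowest_in P A v"
proof -
  have "finite (depth P ` A)"
    using assms(3,4) finite_subset by blast
  txt \<open>A deepest vertex of A is below all others, as adjacent vertices are comparable.\<close>
  then obtain v where v: "v \<in> A" "depth P v = Max (depth P ` A)"
    using Max_in assms(5) by (metis empty_is_image imageE)
  have "(u, v) \<in> P\<^sup>*" if "u \<in> A" for u
  proof (cases "u = v")
    case False
    have "(v, u) \<notin> P\<^sup>+"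
      using search_tree_depth_less[OF assms(1-3)] Max_ge[OF \<open>finite (depth P ` A)\<close>] that v
      by (metis imageI leD)
    moreover have "(u, v) \<in> P\<^sup>* \<or> (v, u) \<in> P\<^sup>*"
      using search_tree_adjacent_comparable[OF assms(1,2)] clique that v(1) False assms(4)
      by blast
    ultimately show ?thesis
      using False by (auto simp: rtrancl_eq_or_trancl)
  qed simp
  then show ?thesis
    using that v(1) unfolding lowest_in_def by blast
qed

lemma search_tree_lowest_lam:
  assumes "search_tree E S r P" and "symp E" and "finite S" and "A \<subseteq> S" and "lowest_in P A v"
  shows "lam A (r, P) = depth P v" and "v_lam A (r, P) = v"
proof -
  have deeper: "depth P u < depth P v" if "u \<in> A" "u \<noteq> v" for u
    using assms(5) that search_tree_depth_less[OF assms(1-3)]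
    unfolding lowest_in_def by (auto simp: rtrancl_eq_or_trancl)
  have "finite A"
    using assms(3,4) finite_subset by blast
  then have "Max (depth P ` A) = depth P v"
    using assms(5) deeper unfolding lowest_in_def by (intro Max_eqI) (auto intro: less_imp_le)
  then show lam: "lam A (r, P) = depth P v"
    unfolding lam_def by simp
  show "v_lam A (r, P) = v"
    unfolding v_lam_def lam snd_conv
    using assms(5) deeper unfolding lowest_in_def by (intro the_equality) (simp, metis less_irrefl)
qed

lemma search_tree_Px_eq:
  assumes "search_tree E S r P" and "symp E" and "finite S" and "K \<subseteq> S" and "lowest_in P K v"
  shows "Px K x (r, P) = {ins (r, P) i x v | i. i \<le> Suc (depth P v)}"
  unfolding Px_def search_tree_lowest_lam[OF assms] by simp

lemma ins_root: "ins (r, P) 0 x v = (x, insert (x, r) P)"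
  and ins_edge: "j < depth P v \<Longrightarrow> ins (r, P) (Suc j) x v =
    (r, P - {(anc_at P v j, anc_at P v (Suc j))} \<union> {(anc_at P v j, x), (x, anc_at P v (Suc j))})"
  and ins_leaf: "depth P v < i \<Longrightarrow> ins (r, P) i x v = (r, insert (v, x) P)"
  unfolding ins_def by auto

context root_split
begin

lemma edges_split_at_part:
  assumes C0: "C0 \<in> CS"
  shows "P = (\<Union>C\<in>CS - {C0}. insert (r, rt C) (Pt C)) \<union> insert (r, rt C0) (Pt C0)"
    and "(\<Union>C\<in>CS - {C0}. insert (r, rt C) (Pt C)) \<inter> insert (r, rt C0) (Pt C0) = {}"
proof -
  show "P = (\<Union>C\<in>CS - {C0}. insert (r, rt C) (Pt C)) \<union> insert (r, rt C0) (Pt C0)"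
    unfolding edges_eq using C0 by blast
  define others where "others = (\<Union>C\<in>CS - {C0}. insert (r, rt C) (Pt C))"
  have "b \<notin> C0" if edge: "(a, b) \<in> others" for a b
  proof -
    obtain C where C: "C \<in> CS - {C0}" "(a, b) \<in> insert (r, rt C) (Pt C)"
      using edge unfolding others_def by blast
    then have "b \<in> C"
      using part_edges_within part_root_in by blast
    then show ?thesis
      using disjoint_parts C(1) C0 by (auto dest: disjointD)
  qed
  then show "(\<Union>C\<in>CS - {C0}. insert (r, rt C) (Pt C)) \<inter> insert (r, rt C0) (Pt C0) = {}"
    unfolding others_def[symmetric] using part_edges_within[OF C0] part_root_in[OF C0] by blast
qed

lemma lowest_in_part_iff:
  assumes C0: "C0 \<in> CS" and "v \<in> C0" and "A \<subseteq> insert r C0"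
  shows "lowest_in P A v \<longleftrightarrow> lowest_in (Pt C0) (A \<inter> C0) v"
  using assms(3) root_notin_part[OF C0] \<open>v \<in> C0\<close>
  unfolding lowest_in_def rtrancl_into_part_iff[OF C0 \<open>v \<in> C0\<close>] by auto

lemma ins_into_part:
  assumes C0: "C0 \<in> CS" and "finite C0" and "v \<in> C0"
    and tree: "search_tree E C0 (rt C0) (Pt C0)" and "symp E"
    and "i \<le> Suc (depth (Pt C0) v)" and ins_part: "ins (rt C0, Pt C0) i x v = (r0, P0)"
  shows "ins (r, P) (Suc i) x v = (r, (\<Union>C\<in>CS - {C0}. insert (r, rt C) (Pt C)) \<union> insert (r, r0) P0)"
proof -
  define others where "others = (\<Union>C\<in>CS - {C0}. insert (r, rt C) (Pt C))"
  note P_eq = edges_split_at_part(1)[OF C0, folded others_def]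
  note others_C0 = edges_split_at_part(2)[OF C0, folded others_def]
  have r_rt: "(r, rt C0) \<notin> Pt C0"
    using part_edges_within[OF C0] root_notin_part[OF C0] by blast
  have depth_v: "depth P v = Suc (depth (Pt C0) v)"
    using depth_part[OF C0 \<open>finite C0\<close> \<open>v \<in> C0\<close>] .
  note anc_at_C0 = anc_at_part[OF C0 \<open>finite C0\<close> \<open>v \<in> C0\<close>]
  consider (root) "i = 0" | (edge) j where "i = Suc j" "j < depth (Pt C0) v"
    | (leaf) "depth (Pt C0) v < i"
    using \<open>i \<le> Suc (depth (Pt C0) v)\<close> by (metis Suc_le_lessD not0_implies_Suc not_le)
  then show ?thesis
  proof cases
    case root
    have "anc_at P v 0 = r"
      using anc_at_0_part[OF C0 \<open>finite C0\<close> \<open>v \<in> C0\<close>] .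
    moreover have "anc_at (Pt C0) v 0 = rt C0"
      using rooted_at_anc_at_0[OF rooted_parts[OF C0] \<open>finite C0\<close> \<open>v \<in> C0\<close>] .
    ultimately have "ins (r, P) (Suc i) x v = (r, P - {(r, rt C0)} \<union> {(r, x), (x, rt C0)})"
      using ins_edge[of 0 P v r x] root depth_v anc_at_C0 by simp
    moreover have "r0 = x" and "P0 = insert (x, rt C0) (Pt C0)"
      using ins_part ins_root[of "rt C0" "Pt C0" x v] root by auto
    moreover have "P - {(r, rt C0)} = others \<union> Pt C0"
      using P_eq others_C0 r_rt by blast
    ultimately show ?thesis
      unfolding others_def[symmetric] by auto
  next
    case (edge j)
    define a b where "a = anc_at (Pt C0) v j" and "b = anc_at (Pt C0) v (Suc j)"
    have "(a, b) \<in> Pt C0"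
      unfolding a_def b_def
      using search_tree_path_edge[OF tree \<open>symp E\<close> \<open>finite C0\<close> \<open>v \<in> C0\<close> edge(2)] .
    moreover have "ins (r, P) (Suc i) x v = (r, P - {(a, b)} \<union> {(a, x), (x, b)})"
      using ins_edge[of "Suc j" P v r x] edge depth_v anc_at_C0 unfolding a_def b_def by simp
    moreover have "r0 = rt C0" and "P0 = Pt C0 - {(a, b)} \<union> {(a, x), (x, b)}"
      using ins_part ins_edge[of j "Pt C0" v "rt C0" x] edge unfolding a_def b_def by auto
    moreover have "P - {(a, b)} = others \<union> insert (r, rt C0) (Pt C0 - {(a, b)})"
      using P_eq others_C0 r_rt \<open>(a, b) \<in> Pt C0\<close> by blast
    ultimately show ?thesis
      unfolding others_def[symmetric] by auto
  next
    case leaf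
    then have "ins (r, P) (Suc i) x v = (r, insert (v, x) P)"
      using ins_leaf[of P v "Suc i" r x] depth_v by simp
    moreover have "r0 = rt C0" and "P0 = insert (v, x) (Pt C0)"
      using ins_part ins_leaf[of "Pt C0" v i "rt C0" x] leaf by auto
    ultimately show ?thesis
      using P_eq unfolding others_def[symmetric] by auto
  qed
qed

end

text \<open>The new root \<open>THE c. (x, c) \<in> P\<close> is meaningful only when x is a root with a single
  child, which is the case for insertions at position 0.\<close>

definition remove_vertex :: "'a \<Rightarrow> 'a rtree \<Rightarrow> 'a rtree" where
  "remove_vertex x T = (case T of (r, P) \<Rightarrow>
     (if r = x then THE c. (x, c) \<in> P else r,
      {(a, b) \<in> P. a \<noteq> x \<and> b \<noteq> x} \<union> {(a, b). (a, x) \<in> P \<and> (x, b) \<in> P}))"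

lemma remove_vertex_ins:
  assumes tree: "search_tree E S r P" and "symp E" and "finite S" and "x \<notin> S"
    and "v \<in> S" and "i \<le> Suc (depth P v)"
  shows "remove_vertex x (ins (r, P) i x v) = (r, P)"
proof -
  have rooted: "rooted_at S r P"
    using search_tree_rooted_at[OF tree \<open>symp E\<close>] .
  note P_sub = rooted_at_edges_within[OF rooted]
  have "r \<in> S"
    using rooted_at_root_in[OF rooted] .
  then have "r \<noteq> x" and x_free: "(a, x) \<notin> P" "(x, a) \<notin> P" for a
    using assms(4) P_sub by auto
  consider (root) "i = 0" | (edge) j where "i = Suc j" "j < depth P v" | (leaf) "depth P v < i"
    using assms(6) by (metis Suc_le_lessD not0_implies_Suc not_le)
  then show ?thesis
  proof cases
    case root
    have "(THE c. (x, c) \<in> insert (x, r) P) = r"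
      using x_free by auto
    moreover have "{(a, b) \<in> insert (x, r) P. a \<noteq> x \<and> b \<noteq> x} = P"
      using x_free by auto
    moreover have "{(a, b). (a, x) \<in> insert (x, r) P \<and> (x, b) \<in> insert (x, r) P} = {}"
      using x_free \<open>r \<noteq> x\<close> by auto
    ultimately show ?thesis
      unfolding root ins_root remove_vertex_def by (simp only: prod.case if_True Un_empty_right simp_thms)
  next
    case (edge j)
    define a b where "a = anc_at P v j" and "b = anc_at P v (Suc j)"
    define Q where "Q = P - {(a, b)} \<union> {(a, x), (x, b)}"
    have "(a, b) \<in> P"
      unfolding a_def b_def using search_tree_path_edge[OF tree assms(2,3,5) edge(2)] .
    then have "a \<noteq> x" and "b \<noteq> x"
      using x_free by auto
    then have "{(c, d) \<in> Q. c \<noteq> x \<and> d \<noteq> x} = P - {(a, b)}"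
      and "{(c, d). (c, x) \<in> Q \<and> (x, d) \<in> Q} = {(a, b)}"
      unfolding Q_def using x_free by auto
    then show ?thesis
      unfolding edge ins_edge[OF edge(2)] remove_vertex_def a_def[symmetric] b_def[symmetric]
        Q_def[symmetric]
      using \<open>(a, b) \<in> P\<close> by (simp only: prod.case if_not_P[OF \<open>r \<noteq> x\<close>]) auto
  next
    case leaf
    have "{(c, d) \<in> insert (v, x) P. c \<noteq> x \<and> d \<noteq> x} = P"
      and "{(c, d). (c, x) \<in> insert (v, x) P \<and> (x, d) \<in> insert (v, x) P} = {}"
      using x_free assms(4,5) by auto
    then show ?thesis
      unfolding ins_leaf[OF leaf] remove_vertex_def
      by (simp only: prod.case if_not_P[OF \<open>r \<noteq> x\<close>] Un_empty_right)
  qed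
qed

locale clique_extension =
  fixes V :: "'a set" and E :: "'a \<Rightarrow> 'a \<Rightarrow> bool" and K :: "'a set" and x :: 'a
  assumes graph: "graph V E" and clique_subset: "K \<subseteq> V"
    and clique: "\<forall>u\<in>K. \<forall>v\<in>K. u \<noteq> v \<longrightarrow> E u v" and new_vertex: "x \<notin> V"
begin

abbreviation EK :: "'a \<Rightarrow> 'a \<Rightarrow> bool" where
  "EK \<equiv> add_vertex_edges E K x"

lemma finite_V: "finite V"
  using graph unfolding graph_def by blast

lemma symp_E: "symp E"
  using graph unfolding graph_def by (blast intro: sympI)

lemma symp_EK: "symp EK"
  using symp_E unfolding add_vertex_edges_def by (blast intro: sympI dest: sympD)

lemma EK_old: "u \<noteq> x \<Longrightarrow> v \<noteq> x \<Longrightarrow> EK u v \<longleftrightarrow> E u v"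
  unfolding add_vertex_edges_def by blast

lemma EK_new: "EK x v \<longleftrightarrow> v \<in> K"
  using graph new_vertex clique_subset unfolding graph_def add_vertex_edges_def by blast

lemma search_tree_EK_iff:
  assumes "x \<notin> S"
  shows "search_tree EK S r P \<longleftrightarrow> search_tree E S r P"
proof -
  have "\<forall>a\<in>S. \<forall>b\<in>S. EK a b = E a b"
    using assms unfolding add_vertex_edges_def by auto
  then show ?thesis
    using search_tree_cong[of EK S r P E] search_tree_cong[of E S r P EK] by auto
qed

lemma components_EK:
  assumes "x \<notin> S"
  shows "components EK S = components E S"
proof -
  have "reach EK S = reach E S"
    by (rule reach_cong) (use assms in \<open>auto simp: add_vertex_edges_def\<close>)
  then show ?thesis
    unfolding components_def by simp
qed

definition clique_part :: "'a set \<Rightarrow> 'a set" where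
  "clique_part W = {v \<in> W. \<exists>k\<in>K \<inter> W. reach E W k v}"

lemma reach_in_clique:
  assumes "k \<in> K \<inter> W" and "k' \<in> K \<inter> W"
  shows "reach E W k k'"
proof (cases "k = k'")
  case False
  then have "E k k'"
    using clique assms by blast
  then show ?thesis
    using reach_edge[of k W k' E] assms by blast
qed simp

lemma clique_part_eq_component:
  assumes "k \<in> K \<inter> W"
  shows "clique_part W = component_of E W k"
proof -
  have "(\<exists>k'\<in>K \<inter> W. reach E W k' v) \<longleftrightarrow> reach E W k v" for v
    using reach_trans[OF reach_in_clique[OF assms]] assms by blast
  then show ?thesis
    unfolding clique_part_def by simp
qed

lemma clique_subset_clique_part: "K \<inter> W \<subseteq> clique_part W"
proof
  fix k
  assume k: "k \<in> K \<inter> W"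
  then show "k \<in> clique_part W"
    unfolding clique_part_eq_component[OF k] by simp
qed

lemma clique_part_empty_iff: "clique_part W = {} \<longleftrightarrow> K \<inter> W = {}"
proof
  show "K \<inter> W = {}" if "clique_part W = {}"
    using that clique_subset_clique_part by blast
  show "clique_part W = {}" if "K \<inter> W = {}"
    using that unfolding clique_part_def by blast
qed

lemma clique_part_in_components:
  assumes "K \<inter> W \<noteq> {}"
  shows "clique_part W \<in> components E W"
proof -
  obtain k where k: "k \<in> K \<inter> W"
    using assms by blast
  then show ?thesis
    unfolding clique_part_eq_component[OF k] using component_of_in_components[of k W E] by simp
qed

lemma reach_within_clique_part:
  assumes "u \<in> clique_part W" and "v \<in> clique_part W"
  shows "reach E W u v"
proof -
  obtain k where k: "k \<in> K \<inter> W"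
    using assms(1) unfolding clique_part_def by blast
  then have "reach E W k u" and "reach E W k v"
    using assms unfolding clique_part_eq_component[OF k] by simp_all
  then show ?thesis
    using reach_trans reach_sym[OF symp_E] by metis
qed

lemma clique_part_reach_closed:
  assumes "u \<in> clique_part W" and "reach E W u v"
  shows "v \<in> clique_part W"
proof -
  obtain k where "k \<in> K \<inter> W" and "reach E W k u" and "u \<in> W"
    using assms(1) unfolding clique_part_def by blast
  then show ?thesis
    using reach_trans[OF _ assms(2)] reach_in[OF assms(2)] unfolding clique_part_def by blast
qed

lemma reach_EK_of_reach_E: "reach E W u v \<Longrightarrow> reach EK (insert x W) u v"
  by (erule reach_mono) (auto simp: add_vertex_edges_def)

lemma reach_EK_new_vertex:
  assumes "u \<in> clique_part W"
  shows "reach EK (insert x W) u x"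
proof -
  obtain k where k: "k \<in> K \<inter> W" and "reach E W k u"
    using assms unfolding clique_part_def by blast
  then have "reach EK (insert x W) u k"
    using reach_EK_of_reach_E reach_sym[OF symp_E] by blast
  moreover have "reach EK (insert x W) k x"
    using reach_edge[of k "insert x W" x EK] k unfolding add_vertex_edges_def by blast
  ultimately show ?thesis
    by (rule reach_trans)
qed

lemma reach_EK_cases:
  assumes "W \<subseteq> V" and "u \<in> W" and "reach EK (insert x W) u v"
  shows "(v \<in> W \<longrightarrow> reach E W u v) \<and> (v = x \<longrightarrow> u \<in> clique_part W)"
proof -
  have "(u, v) \<in> {(a, b). a \<in> insert x W \<and> b \<in> insert x W \<and> EK a b}\<^sup>*"
    using assms(3) unfolding reach_def .
  then show ?thesis
  proof (induction rule: rtrancl_induct)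
    case base
    then show ?case
      using assms new_vertex by auto
  next
    case (step y z)
    have "x \<notin> W"
      using assms(1) new_vertex by blast
    have y: "y \<in> insert x W" and z: "z \<in> insert x W" and "EK y z"
      using step(2) by auto
    show ?case
    proof (cases "y = x")
      case True
      then have "u \<in> clique_part W" and "z \<in> K"
        using step(3) EK_new \<open>EK y z\<close> by auto
      moreover have "z \<noteq> x"
        using \<open>z \<in> K\<close> clique_subset new_vertex by blast
      ultimately have "z \<in> K \<inter> W"
        using z by auto
      then have "z \<in> clique_part W"
        unfolding clique_part_eq_component[OF \<open>z \<in> K \<inter> W\<close>] by simp
      then show ?thesis
        using \<open>u \<in> clique_part W\<close> reach_within_clique_part \<open>z \<noteq> x\<close> by blast
    next
      case False
      then have "y \<in> W" and "reach E W u y"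
        using y step(3) by auto
      show ?thesis
      proof (cases "z = x")
        case True
        then have "y \<in> K"
          using \<open>EK y z\<close> symp_EK EK_new by (blast dest: sympD)
        then have "y \<in> K \<inter> W"
          using \<open>y \<in> W\<close> by blast
        then have "y \<in> clique_part W"
          unfolding clique_part_eq_component[OF \<open>y \<in> K \<inter> W\<close>] by simp
        then have "u \<in> clique_part W"
          using \<open>reach E W u y\<close> clique_part_reach_closed reach_sym[OF symp_E] by blast
        then show ?thesis
          using True \<open>x \<notin> W\<close> by blast
      next
        case False
        then have "reach E W y z"
          using reach_edge[of y W z E] EK_old \<open>EK y z\<close> \<open>y \<in> W\<close> \<open>y \<noteq> x\<close> z by auto
        then show ?thesis
          using reach_trans[OF \<open>reach E W u y\<close>] False by simp
      qed
    qed
  qed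
qed

lemma reach_EK_iff:
  assumes "W \<subseteq> V" and "u \<in> W" and "v \<in> W"
  shows "reach EK (insert x W) u v \<longleftrightarrow> reach E W u v"
  using reach_EK_cases[OF assms(1,2)] reach_EK_of_reach_E assms(3) by blast

lemma reach_EK_new_vertex_iff:
  assumes "W \<subseteq> V" and "u \<in> W"
  shows "reach EK (insert x W) u x \<longleftrightarrow> u \<in> clique_part W"
  using reach_EK_cases[OF assms] reach_EK_new_vertex by blast

lemma component_of_clique_part:
  assumes "u \<in> clique_part W"
  shows "component_of E W u = clique_part W"
proof -
  obtain k where k: "k \<in> K \<inter> W" and "reach E W k u"
    using assms unfolding clique_part_def by blast
  then show ?thesis
    using clique_part_eq_component[OF k] component_of_eq[OF symp_E] by simp
qed

lemma component_of_eq_clique_part_iff: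
  assumes "u \<in> W"
  shows "component_of E W u = clique_part W \<longleftrightarrow> u \<in> clique_part W"
  using component_of_clique_part assms by auto

text \<open>As K is a clique, x merges no components: it joins the one meeting K, if any.\<close>

lemma components_add_vertex:
  assumes W: "W \<subseteq> V"
  shows "components EK (insert x W) =
    insert (insert x (clique_part W)) (components E W - {clique_part W})"
proof -
  let ?CP = "clique_part W"
  have "x \<notin> W"
    using W new_vertex by blast
  have CP_sub: "?CP \<subseteq> W"
    unfolding clique_part_def by blast
  have comp_x: "component_of EK (insert x W) x = insert x ?CP"
  proof -
    have "reach EK (insert x W) x v \<longleftrightarrow> v \<in> ?CP" if "v \<in> W" for v
      using reach_EK_new_vertex_iff[OF W that] reach_sym[OF symp_EK] by blast
    then show ?thesis
      using CP_sub by auto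
  qed
  have comp_old: "component_of EK (insert x W) u =
    (if u \<in> ?CP then insert x ?CP else component_of E W u)" if "u \<in> W" for u
    using reach_EK_iff[OF W that] reach_EK_new_vertex_iff[OF W that] component_of_clique_part
      \<open>x \<notin> W\<close> by auto
  have "component_of EK (insert x W) ` W = (\<lambda>_. insert x ?CP) ` ?CP \<union> component_of E W ` (W - ?CP)"
    using comp_old CP_sub by (auto simp: image_iff)
  moreover have "components E W - {?CP} = component_of E W ` (W - ?CP)"
    unfolding components_eq_image using component_of_eq_clique_part_iff by auto
  ultimately show ?thesis
    unfolding components_eq_image image_insert comp_x by auto
qed

lemma components_add_vertex_remove_root:
  assumes "S \<subseteq> V" and "r \<in> S"
  shows "components EK (insert x S - {r}) =
    insert (insert x (clique_part (S - {r}))) (components E (S - {r}) - {clique_part (S - {r})})"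
proof -
  have "insert x S - {r} = insert x (S - {r})"
    using assms new_vertex by blast
  then show ?thesis
    using components_add_vertex[of "S - {r}"] assms(1) by auto
qed

lemma connected_add_vertex:
  assumes "S \<subseteq> V" and "connected_graph E S" and "K \<inter> S \<noteq> {}"
  shows "connected_graph EK (insert x S)"
proof -
  obtain k where k: "k \<in> K \<inter> S"
    using assms(3) by blast
  have "clique_part S = S"
    unfolding clique_part_eq_component[OF k] using assms(2) k unfolding connected_graph_def by auto
  then have to_x: "reach EK (insert x S) u x" if "u \<in> insert x S" for u
    using reach_EK_new_vertex_iff[OF assms(1)] that by (cases "u = x") auto
  show ?thesis
    unfolding connected_graph_def
  proof (intro conjI ballI)
    fix u v
    assume "u \<in> insert x S" and "v \<in> insert x S"
    then show "reach EK (insert x S) u v"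
      using reach_trans[OF to_x reach_sym[OF symp_EK to_x]] by blast
  qed simp
qed

lemma connected_remove_vertex:
  assumes "S \<subseteq> V" and "S \<noteq> {}" and "connected_graph EK (insert x S)"
  shows "connected_graph E S"
  using assms reach_EK_iff[OF assms(1)] unfolding connected_graph_def by blast

lemma clique_meets_connected:
  assumes "S \<subseteq> V" and "S \<noteq> {}" and "connected_graph EK (insert x S)"
  shows "K \<inter> S \<noteq> {}"
proof -
  obtain s where "s \<in> S"
    using assms(2) by blast
  then have "reach EK (insert x S) s x"
    using assms(3) unfolding connected_graph_def by blast
  then have "clique_part S \<noteq> {}"
    using reach_EK_new_vertex_iff[OF assms(1) \<open>s \<in> S\<close>] by blast
  then show ?thesis
    using clique_part_empty_iff by blast
qed

lemma search_tree_new_vertex_only: "search_tree EK {x} x {}"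
proof -
  have "components EK ({x} - {x}) = {}"
    unfolding components_def by simp
  moreover have "connected_graph EK {x}"
    unfolding connected_graph_def by simp
  ultimately show ?thesis
    using search_tree.intros[of x "{x}" EK "\<lambda>_. x" "\<lambda>_. {}" "{}"] by simp
qed

lemma search_tree_new_root:
  assumes tree: "search_tree E S r P" and "S \<subseteq> V" and "K \<inter> S \<noteq> {}"
  shows "search_tree EK (insert x S) x (insert (x, r) P)"
proof -
  have "x \<notin> S"
    using assms(2) new_vertex by blast
  then have "components EK (insert x S - {x}) = {S}"
    using components_EK components_of_connected[OF search_tree_connected[OF tree]] by simp
  moreover have "search_tree EK S r P"
    using search_tree_EK_iff[OF \<open>x \<notin> S\<close>] tree by simp
  moreover have "connected_graph EK (insert x S)"
    using connected_add_vertex[OF assms(2) search_tree_connected[OF tree] assms(3)] .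
  ultimately show ?thesis
    using search_tree.intros[of x "insert x S" EK "\<lambda>_. r" "\<lambda>_. P"] by simp
qed

lemma search_tree_graft:
  assumes "r \<in> S" and "S \<subseteq> V" and "connected_graph E S" and "K \<inter> S \<noteq> {}"
    and others: "\<forall>C\<in>components E (S - {r}) - {clique_part (S - {r})}. search_tree E C (rt C) (Pt C)"
    and new_part: "search_tree EK (insert x (clique_part (S - {r}))) r0 P0"
  shows "search_tree EK (insert x S) r
    ((\<Union>C\<in>components E (S - {r}) - {clique_part (S - {r})}. insert (r, rt C) (Pt C)) \<union> insert (r, r0) P0)"
proof -
  let ?CS = "components E (S - {r}) - {clique_part (S - {r})}"
  let ?D = "insert x (clique_part (S - {r}))"
  define rt' where "rt' = rt(?D := r0)"
  define Pt' where "Pt' = Pt(?D := P0)"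
  have "x \<notin> S"
    using assms(2) new_vertex by blast
  have comps: "components EK (insert x S - {r}) = insert ?D ?CS"
    using components_add_vertex_remove_root assms(1,2) by blast
  have "?D \<notin> ?CS"
    using components_subset \<open>x \<notin> S\<close> by blast
  have "search_tree EK C (rt' C) (Pt' C)" if "C \<in> components EK (insert x S - {r})" for C
  proof (cases "C = ?D")
    case True
    then show ?thesis
      using new_part unfolding rt'_def Pt'_def by simp
  next
    case False
    then have C: "C \<in> ?CS"
      using that comps by blast
    then have "x \<notin> C"
      using components_subset \<open>x \<notin> S\<close> by blast
    then show ?thesis
      using others C False search_tree_EK_iff unfolding rt'_def Pt'_def by simp
  qed
  moreover have "(\<Union>C\<in>components EK (insert x S - {r}). insert (r, rt' C) (Pt' C)) =
    (\<Union>C\<in>?CS. insert (r, rt C) (Pt C)) \<union> insert (r, r0) P0"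
  proof -
    have "(\<Union>C\<in>?CS. insert (r, rt' C) (Pt' C)) = (\<Union>C\<in>?CS. insert (r, rt C) (Pt C))"
      using \<open>?D \<notin> ?CS\<close> unfolding rt'_def Pt'_def by (intro SUP_cong) auto
    then show ?thesis
      unfolding comps UN_insert rt'_def Pt'_def by auto
  qed
  moreover have "connected_graph EK (insert x S)"
    using connected_add_vertex assms(2-4) .
  ultimately show ?thesis
    using search_tree.intros[of r "insert x S" EK rt' Pt'] \<open>r \<in> S\<close> by auto
qed

lemma search_tree_ins_leaf_of_root:
  assumes "r \<in> S" and "S \<subseteq> V" and "connected_graph E S" and "K \<inter> S = {r}"
    and children: "\<forall>C\<in>components E (S - {r}). search_tree E C (rt C) (Pt C)"
  shows "search_tree EK (insert x S) r (insert (r, x) (\<Union>C\<in>components E (S - {r}). insert (r, rt C) (Pt C)))"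
proof -
  have "clique_part (S - {r}) = {}"
    using assms(4) clique_part_empty_iff by blast
  moreover have "components E (S - {r}) - {{}} = components E (S - {r})"
    using components_nonempty by blast
  ultimately show ?thesis
    using search_tree_graft[OF assms(1-3), of rt Pt x "{}"] assms(4) children
      search_tree_new_vertex_only by simp
qed

lemma search_tree_ins_into_clique_part:
  assumes "r \<in> S" and "S \<subseteq> V" and "connected_graph E S"
    and children: "\<forall>C\<in>components E (S - {r}). search_tree E C (rt C) (Pt C)"
    and P_def: "P = (\<Union>C\<in>components E (S - {r}). insert (r, rt C) (Pt C))"
    and lowest: "lowest_in P (K \<inter> S) v" and "v \<noteq> r" and "j \<le> depth P v"
    and IH: "\<forall>C\<in>components E (S - {r}). \<forall>v i. lowest_in (Pt C) (K \<inter> C) v \<longrightarrow>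
      i \<le> Suc (depth (Pt C) v) \<longrightarrow> ins (rt C, Pt C) i x v \<in> search_trees (insert x C) EK"
  shows "ins (r, P) (Suc j) x v \<in> search_trees (insert x S) EK"
proof -
  define C0 where "C0 = clique_part (S - {r})"
  interpret root_split "components E (S - {r})" r rt Pt P
    using root_split_search_trees[OF symp_E children P_def] .
  have v: "v \<in> K \<inter> (S - {r})"
    using lowest \<open>v \<noteq> r\<close> unfolding lowest_in_def by simp
  then have C0: "C0 \<in> components E (S - {r})"
    unfolding C0_def by (intro clique_part_in_components) auto
  have "v \<in> C0"
    unfolding C0_def clique_part_eq_component[OF v] using v by simp
  have "C0 \<subseteq> V"
    using components_subset[OF C0] assms(2) by auto
  then have "finite C0"
    using finite_V finite_subset by auto
  have "K \<inter> S \<subseteq> insert r C0"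
    using clique_subset_clique_part[of "S - {r}"] unfolding C0_def by blast
  then have "lowest_in (Pt C0) (K \<inter> S \<inter> C0) v"
    using lowest_in_part_iff[OF C0 \<open>v \<in> C0\<close>] lowest by blast
  moreover have "K \<inter> S \<inter> C0 = K \<inter> C0"
    using components_subset[OF C0] by blast
  ultimately have "lowest_in (Pt C0) (K \<inter> C0) v"
    by simp
  moreover have j: "j \<le> Suc (depth (Pt C0) v)"
    using \<open>j \<le> depth P v\<close> depth_part[OF C0 \<open>finite C0\<close> \<open>v \<in> C0\<close>] by simp
  ultimately have "ins (rt C0, Pt C0) j x v \<in> search_trees (insert x C0) EK"
    using IH C0 by blast
  moreover obtain r0 P0 where ins0: "ins (rt C0, Pt C0) j x v = (r0, P0)"
    by fastforce
  ultimately have "search_tree EK (insert x S) r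
    ((\<Union>C\<in>components E (S - {r}) - {C0}. insert (r, rt C) (Pt C)) \<union> insert (r, r0) P0)"
    using search_tree_graft[OF assms(1-3), of rt Pt r0 P0] v children
    unfolding search_trees_def C0_def by auto
  moreover have "ins (r, P) (Suc j) x v =
    (r, (\<Union>C\<in>components E (S - {r}) - {C0}. insert (r, rt C) (Pt C)) \<union> insert (r, r0) P0)"
    using ins_into_part[OF C0 \<open>finite C0\<close> \<open>v \<in> C0\<close> _ symp_E j ins0] children C0 by simp
  ultimately show ?thesis
    unfolding search_trees_def by simp
qed

lemma search_tree_ins:
  assumes "search_tree E S r P" and "S \<subseteq> V" and "lowest_in P (K \<inter> S) v"
    and "i \<le> Suc (depth P v)"
  shows "ins (r, P) i x v \<in> search_trees (insert x S) EK"
  using assms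
proof (induct arbitrary: v i rule: search_tree.induct)
  case (1 r S rt Pt P v i)
  have children: "\<forall>C\<in>components E (S - {r}). search_tree E C (rt C) (Pt C)"
    using 1(3) by blast
  interpret root_split "components E (S - {r})" r rt Pt P
    using root_split_search_trees[OF symp_E children 1(4)] .
  have tree: "search_tree E S r P"
    using search_tree.intros[OF 1(1,2) children 1(4)] .
  have v: "v \<in> K \<inter> S" and v_lowest: "\<forall>u\<in>K \<inter> S. (u, v) \<in> P\<^sup>*"
    using 1(6) unfolding lowest_in_def by auto
  consider (new_root) "i = 0" | (leaf_of_root) j where "i = Suc j" "v = r"
    | (in_part) j where "i = Suc j" "v \<noteq> r"
    by (cases i) auto
  then show ?case
  proof cases
    case new_root
    have "K \<inter> S \<noteq> {}"
      using v by blast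
    then show ?thesis
      using search_tree_new_root[OF tree 1(5)] unfolding search_trees_def new_root ins_root by simp
  next
    case (leaf_of_root j)
    have "u = r" if "u \<in> K \<inter> S" for u
      using v_lowest that leaf_of_root(2) rooted_at_no_path_into_root[OF rooted, of u]
      by (metis rtranclD)
    then have "K \<inter> S = {r}"
      using v leaf_of_root(2) by blast
    moreover have "ins (r, P) i x v = (r, insert (r, x) P)"
      using ins_leaf[of P r i r x] rooted_at_depth_root[OF rooted] leaf_of_root by simp
    ultimately show ?thesis
      using search_tree_ins_leaf_of_root[OF 1(1,5,2) _ children] 1(4)
      unfolding search_trees_def by simp
  next
    case (in_part j)
    have "\<forall>C\<in>components E (S - {r}). \<forall>v i. lowest_in (Pt C) (K \<inter> C) v \<longrightarrow>
      i \<le> Suc (depth (Pt C) v) \<longrightarrow> ins (rt C, Pt C) i x v \<in> search_trees (insert x C) EK"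
      using 1(3,5) components_subset by blast
    then show ?thesis
      using search_tree_ins_into_clique_part[OF 1(1,5,2) children 1(4,6) in_part(2)] 1(7) in_part(1)
      by simp
  qed
qed

definition arises_by_insertion :: "'a set \<Rightarrow> 'a rtree \<Rightarrow> bool" where
  "arises_by_insertion S T' \<longleftrightarrow> (\<exists>r P i v. search_tree E S r P \<and> lowest_in P (K \<inter> S) v \<and>
     i \<le> Suc (depth P v) \<and> T' = ins (r, P) i x v)"

lemma arises_by_insertion_new_root:
  assumes "search_tree EK (insert x S) x P'" and "S \<subseteq> V" and "S \<noteq> {}"
  shows "arises_by_insertion S (x, P')"
proof -
  have "x \<notin> S"
    using assms(2) new_vertex by blast
  obtain rt Pt where "connected_graph EK (insert x S)"
    and children: "\<forall>C\<in>components EK (insert x S - {x}). search_tree EK C (rt C) (Pt C)"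
    and P'_eq: "P' = (\<Union>C\<in>components EK (insert x S - {x}). insert (x, rt C) (Pt C))"
    using assms(1) by (cases rule: search_tree.cases) blast
  then have "connected_graph E S" and "K \<inter> S \<noteq> {}"
    using connected_remove_vertex clique_meets_connected assms(2,3) by blast+
  then have comps: "components EK (insert x S - {x}) = {S}"
    using components_EK \<open>x \<notin> S\<close> components_of_connected by simp
  then have tree: "search_tree E S (rt S) (Pt S)"
    using children search_tree_EK_iff[OF \<open>x \<notin> S\<close>] by simp
  have "finite S"
    using finite_V assms(2) finite_subset by auto
  moreover have "\<forall>u\<in>K \<inter> S. \<forall>v\<in>K \<inter> S. u \<noteq> v \<longrightarrow> E u v"
    using clique by blast
  ultimately obtain v where "lowest_in (Pt S) (K \<inter> S) v"
    using search_tree_clique_has_lowest[OF tree symp_E _ Int_lower2 \<open>K \<inter> S \<noteq> {}\<close>] by blast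
  moreover have "(x, P') = ins (rt S, Pt S) 0 x v"
    unfolding ins_root P'_eq comps by simp
  ultimately show ?thesis
    unfolding arises_by_insertion_def using tree by blast
qed

lemma arises_by_insertion_leaf_of_root:
  assumes "r \<in> S" and "connected_graph E S" and "K \<inter> S = {r}"
    and children: "\<forall>C\<in>components E (S - {r}). search_tree E C (rt C) (Pt C)"
  shows "arises_by_insertion S (r, insert (r, x) (\<Union>C\<in>components E (S - {r}). insert (r, rt C) (Pt C)))"
proof -
  define P where "P = (\<Union>C\<in>components E (S - {r}). insert (r, rt C) (Pt C))"
  have tree: "search_tree E S r P"
    using search_tree.intros[OF assms(1,2) children P_def] .
  interpret root_split "components E (S - {r})" r rt Pt P
    using root_split_search_trees[OF symp_E children P_def] .
  have "lowest_in P (K \<inter> S) r"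
    using assms(3) unfolding lowest_in_def by simp
  moreover have "(r, insert (r, x) P) = ins (r, P) (Suc 0) x r"
    using ins_leaf[of P r "Suc 0" r x] rooted_at_depth_root[OF rooted] by simp
  ultimately show ?thesis
    unfolding arises_by_insertion_def P_def[symmetric] using tree by fastforce
qed

lemma arises_by_insertion_in_part:
  assumes "r \<in> S" and "S \<subseteq> V" and "connected_graph E S" and "K \<inter> (S - {r}) \<noteq> {}"
    and others: "\<forall>C\<in>components E (S - {r}) - {clique_part (S - {r})}. search_tree E C (rt C) (Pt C)"
    and "arises_by_insertion (clique_part (S - {r})) (r0, P0)"
  shows "arises_by_insertion S
    (r, (\<Union>C\<in>components E (S - {r}) - {clique_part (S - {r})}. insert (r, rt C) (Pt C)) \<union> insert (r, r0) P0)"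
proof -
  let ?CS = "components E (S - {r})"
  let ?C0 = "clique_part (S - {r})"
  obtain r1 P1 i1 v1 where tree1: "search_tree E ?C0 r1 P1" and lowest1: "lowest_in P1 (K \<inter> ?C0) v1"
    and i1: "i1 \<le> Suc (depth P1 v1)" and ins1: "(r0, P0) = ins (r1, P1) i1 x v1"
    using assms(6) unfolding arises_by_insertion_def by blast
  have C0: "?C0 \<in> ?CS"
    using clique_part_in_components assms(4) .
  have "finite ?C0"
    using components_subset[OF C0] assms(2) finite_subset[OF _ finite_V] by blast
  have v1: "v1 \<in> K \<inter> ?C0"
    using lowest1 unfolding lowest_in_def by (rule conjunct1)
  then have "v1 \<in> ?C0"
    by simp
  define rt' where "rt' = rt(?C0 := r1)"
  define Pt' where "Pt' = Pt(?C0 := P1)"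
  define P where "P = (\<Union>C\<in>?CS. insert (r, rt' C) (Pt' C))"
  have children: "\<forall>C\<in>?CS. search_tree E C (rt' C) (Pt' C)"
    using others tree1 unfolding rt'_def Pt'_def by auto
  have tree: "search_tree E S r P"
    using search_tree.intros[OF assms(1,3) children P_def] .
  interpret root_split ?CS r rt' Pt' P
    using root_split_search_trees[OF symp_E children P_def] .
  have "(\<Union>C\<in>?CS - {?C0}. insert (r, rt' C) (Pt' C)) = (\<Union>C\<in>?CS - {?C0}. insert (r, rt C) (Pt C))"
    unfolding rt'_def Pt'_def by (intro SUP_cong) auto
  then have "ins (r, P) (Suc i1) x v1 =
    (r, (\<Union>C\<in>?CS - {?C0}. insert (r, rt C) (Pt C)) \<union> insert (r, r0) P0)"
    using ins_into_part[OF C0 \<open>finite ?C0\<close> \<open>v1 \<in> ?C0\<close> _ symp_E, of i1 x r0 P0]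
      tree1 i1 ins1 unfolding rt'_def Pt'_def by simp
  moreover have "lowest_in P (K \<inter> S) v1"
  proof -
    have "K \<inter> S \<subseteq> insert r ?C0"
      using clique_subset_clique_part[of "S - {r}"] by blast
    moreover have "K \<inter> S \<inter> ?C0 = K \<inter> ?C0"
      using components_subset[OF C0] by blast
    ultimately show ?thesis
      using lowest_in_part_iff[OF C0 \<open>v1 \<in> ?C0\<close>] lowest1 unfolding Pt'_def by simp
  qed
  moreover have "Suc i1 \<le> Suc (depth P v1)"
    using i1 depth_part[OF C0 \<open>finite ?C0\<close> \<open>v1 \<in> ?C0\<close>] unfolding Pt'_def by simp
  ultimately show ?thesis
    unfolding arises_by_insertion_def using tree by metis
qed

lemma search_tree_EK_children_split:
  assumes "r \<in> S" and "S \<subseteq> V"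
    and children: "\<forall>C\<in>components EK (insert x S - {r}). search_tree EK C (rt C) (Pt C)"
  shows "\<forall>C\<in>components E (S - {r}) - {clique_part (S - {r})}. search_tree E C (rt C) (Pt C)"
    and "(\<Union>C\<in>components EK (insert x S - {r}). insert (r, rt C) (Pt C)) =
      (\<Union>C\<in>components E (S - {r}) - {clique_part (S - {r})}. insert (r, rt C) (Pt C)) \<union>
      insert (r, rt (insert x (clique_part (S - {r})))) (Pt (insert x (clique_part (S - {r}))))"
proof -
  let ?CS = "components E (S - {r}) - {clique_part (S - {r})}"
  have comps: "components EK (insert x S - {r}) = insert (insert x (clique_part (S - {r}))) ?CS"
    using components_add_vertex_remove_root assms(1,2) by blast
  have "x \<notin> S"
    using assms(2) new_vertex by blast
  show "\<forall>C\<in>?CS. search_tree E C (rt C) (Pt C)"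
  proof
    fix C
    assume C: "C \<in> ?CS"
    then have "x \<notin> C"
      using components_subset \<open>x \<notin> S\<close> by blast
    moreover have "C \<in> components EK (insert x S - {r})"
      using C unfolding comps by blast
    ultimately show "search_tree E C (rt C) (Pt C)"
      using children search_tree_EK_iff by blast
  qed
  show "(\<Union>C\<in>components EK (insert x S - {r}). insert (r, rt C) (Pt C)) =
    (\<Union>C\<in>?CS. insert (r, rt C) (Pt C)) \<union>
    insert (r, rt (insert x (clique_part (S - {r})))) (Pt (insert x (clique_part (S - {r}))))"
    unfolding comps by auto
qed

lemma arises_by_insertion_below_root:
  assumes "r \<in> S" and "S \<subseteq> V" and "connected_graph E S" and "K \<inter> S \<noteq> {}"
    and children: "\<forall>C\<in>components EK (insert x S - {r}). search_tree EK C (rt C) (Pt C)"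
    and part: "clique_part (S - {r}) \<noteq> {} \<Longrightarrow> arises_by_insertion (clique_part (S - {r}))
      (rt (insert x (clique_part (S - {r}))), Pt (insert x (clique_part (S - {r}))))"
  shows "arises_by_insertion S (r, \<Union>C\<in>components EK (insert x S - {r}). insert (r, rt C) (Pt C))"
proof -
  let ?W = "S - {r}"
  let ?C0 = "clique_part ?W"
  let ?D = "insert x ?C0"
  note others = search_tree_EK_children_split(1)[OF assms(1,2) children]
  note edges_eq = search_tree_EK_children_split(2)[OF assms(1,2) children]
  show ?thesis
  proof (cases "?C0 = {}")
    case True
    then have "K \<inter> S = {r}"
      using clique_part_empty_iff[of ?W] assms(4) by auto
    have "?D \<in> components EK (insert x S - {r})"
      using components_add_vertex_remove_root assms(1,2) by blast
    then have "rooted_at ?D (rt ?D) (Pt ?D)"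
      using children search_tree_rooted_at[OF _ symp_EK] by blast
    then have "rt ?D = x" and "Pt ?D = {}"
      unfolding True rooted_at_singleton by simp_all
    moreover have no_empty: "components E ?W - {{}} = components E ?W"
      using components_nonempty by blast
    moreover have "\<forall>C\<in>components E ?W. search_tree E C (rt C) (Pt C)"
      using others unfolding True no_empty .
    ultimately show ?thesis
      using arises_by_insertion_leaf_of_root[OF assms(1,3) \<open>K \<inter> S = {r}\<close>] edges_eq True
      by simp
  next
    case False
    then have "K \<inter> ?W \<noteq> {}"
      using clique_part_empty_iff by blast
    then show ?thesis
      using arises_by_insertion_in_part[OF assms(1-3) _ others part] False edges_eq
      by (simp add: Un_commute)
  qed
qed

lemma search_tree_EK_arises_by_insertion:
  assumes "search_tree EK S' r' P'" and "x \<in> S'" and "S' \<subseteq> insert x V" and "S' \<noteq> {x}"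
  shows "arises_by_insertion (S' - {x}) (r', P')"
  using assms
proof (induct rule: search_tree.induct)
  case (1 r' S' rt Pt P')
  define S where "S = S' - {x}"
  have S': "S' = insert x S" and "S \<subseteq> V" and "S \<noteq> {}" and "x \<notin> S"
    using 1(5-7) unfolding S_def by auto
  have children: "\<forall>C\<in>components EK (insert x S - {r'}). search_tree EK C (rt C) (Pt C)"
    using 1(3) unfolding S' by blast
  have conn: "connected_graph E S" and "K \<inter> S \<noteq> {}"
    using connected_remove_vertex clique_meets_connected \<open>S \<subseteq> V\<close> \<open>S \<noteq> {}\<close> 1(2)
    unfolding S' by blast+
  show ?case
  proof (cases "r' = x")
    case True
    have "search_tree EK (insert x S) r' P'"
      using search_tree.intros[OF 1(1,2) _ 1(4)] children unfolding S' by blast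
    then show ?thesis
      using arises_by_insertion_new_root True \<open>S \<subseteq> V\<close> \<open>S \<noteq> {}\<close> unfolding S_def by simp
  next
    case False
    then have "r' \<in> S"
      using 1(1) S' by blast
    let ?D = "insert x (clique_part (S - {r'}))"
    have "?D \<in> components EK (S' - {r'})"
      using components_add_vertex_remove_root \<open>S \<subseteq> V\<close> \<open>r' \<in> S\<close> unfolding S' by blast
    moreover have "?D \<subseteq> insert x V" and "?D - {x} = clique_part (S - {r'})"
      using \<open>x \<notin> S\<close> \<open>S \<subseteq> V\<close> unfolding clique_part_def by auto
    ultimately have "clique_part (S - {r'}) \<noteq> {} \<Longrightarrow>
      arises_by_insertion (clique_part (S - {r'})) (rt ?D, Pt ?D)"
      using 1(3) by fastforce
    then show ?thesis
      using arises_by_insertion_below_root[OF \<open>r' \<in> S\<close> \<open>S \<subseteq> V\<close> conn \<open>K \<inter> S \<noteq> {}\<close> children]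
        \<open>x \<notin> S\<close>
      unfolding 1(4) S' by simp
  qed
qed

lemma search_tree_has_lowest_clique_vertex:
  assumes "search_tree E V r P" and "K \<noteq> {}"
  obtains v where "lowest_in P K v"
  using search_tree_clique_has_lowest[OF assms(1) symp_E finite_V clique_subset assms(2) clique] .

lemma Px_eq:
  assumes "search_tree E V r P" and "lowest_in P K v"
  shows "Px K x (r, P) = {ins (r, P) i x v | i. i \<le> Suc (depth P v)}"
  using search_tree_Px_eq[OF assms(1) symp_E finite_V clique_subset assms(2)] .

lemma Union_Px:
  assumes "K \<noteq> {}"
  shows "\<Union>(Px K x ` search_trees V E) = {T'. arises_by_insertion V T'}"
proof (intro equalityI subsetI)
  fix T'
  assume "T' \<in> \<Union>(Px K x ` search_trees V E)"
  then obtain r P where tree: "search_tree E V r P" and "T' \<in> Px K x (r, P)"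
    unfolding search_trees_def by blast
  moreover obtain v where v: "lowest_in P K v"
    using search_tree_has_lowest_clique_vertex[OF tree assms] .
  ultimately obtain i where "i \<le> Suc (depth P v)" and "T' = ins (r, P) i x v"
    unfolding Px_eq[OF tree v] by blast
  then show "T' \<in> {T'. arises_by_insertion V T'}"
    unfolding arises_by_insertion_def Int_absorb2[OF clique_subset] using tree v by blast
next
  fix T'
  assume "T' \<in> {T'. arises_by_insertion V T'}"
  then obtain r P i v where tree: "search_tree E V r P" and v: "lowest_in P K v"
    and "i \<le> Suc (depth P v)" and "T' = ins (r, P) i x v"
    unfolding arises_by_insertion_def Int_absorb2[OF clique_subset] by blast
  then have "T' \<in> Px K x (r, P)"
    unfolding Px_eq[OF tree v] by blast
  then show "T' \<in> \<Union>(Px K x ` search_trees V E)"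
    using tree unfolding search_trees_def by blast
qed

lemma arises_by_insertion_iff:
  assumes "V \<noteq> {}"
  shows "arises_by_insertion V T' \<longleftrightarrow> T' \<in> search_trees (insert x V) EK"
proof
  assume "arises_by_insertion V T'"
  then show "T' \<in> search_trees (insert x V) EK"
    unfolding arises_by_insertion_def using search_tree_ins by blast
next
  assume "T' \<in> search_trees (insert x V) EK"
  then obtain r' P' where "T' = (r', P')" and "search_tree EK (insert x V) r' P'"
    unfolding search_trees_def by blast
  moreover have "insert x V - {x} = V" and "insert x V \<noteq> {x}"
    using new_vertex assms by auto
  ultimately show "arises_by_insertion V T'"
    using search_tree_EK_arises_by_insertion[of "insert x V"] by auto
qed

lemma remove_vertex_Px:
  assumes "T \<in> search_trees V E" and "K \<noteq> {}" and "T' \<in> Px K x T"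
  shows "remove_vertex x T' = T"
proof -
  obtain r P where T: "T = (r, P)" and tree: "search_tree E V r P"
    using assms(1) unfolding search_trees_def by blast
  obtain v where v: "lowest_in P K v"
    using search_tree_has_lowest_clique_vertex[OF tree assms(2)] .
  then obtain i where "i \<le> Suc (depth P v)" and "T' = ins (r, P) i x v"
    using assms(3) unfolding T Px_eq[OF tree v] by blast
  moreover have "v \<in> V"
    using v clique_subset unfolding lowest_in_def by blast
  ultimately show ?thesis
    using remove_vertex_ins[OF tree symp_E finite_V new_vertex] T by simp
qed

lemma partition_by_Px:
  assumes "connected_graph E V" and "K \<noteq> {}"
  shows "partition_on (search_trees (insert x V) EK) (Px K x ` search_trees V E)"
proof (rule partition_onI)
  have "V \<noteq> {}"
    using assms(1) unfolding connected_graph_def by blast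
  then show "\<Union>(Px K x ` search_trees V E) = search_trees (insert x V) EK"
    unfolding Union_Px[OF assms(2)] arises_by_insertion_iff[OF \<open>V \<noteq> {}\<close>] by simp
  show "disjnt p q" if "p \<in> Px K x ` search_trees V E" and "q \<in> Px K x ` search_trees V E"
    and "p \<noteq> q" for p q
    using that remove_vertex_Px[OF _ assms(2)] unfolding disjnt_def by blast
  show "{} \<notin> Px K x ` search_trees V E"
    unfolding Px_def by blast
qed

end

theorem proposition2p4:
  fixes V :: "'a set" and E :: "'a \<Rightarrow> 'a \<Rightarrow> bool" and K :: "'a set" and x :: 'a
  assumes "graph V E"
    and "connected_graph E V"
    and "K \<subseteq> V" and "K \<noteq> {}"
    and "\<forall>u\<in>K. \<forall>v\<in>K. u \<noteq> v \<longrightarrow> E u v"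
    and "x \<notin> V"
  shows "partition_on (search_trees (insert x V) (add_vertex_edges E K x))
           (Px K x ` search_trees V E)"
proof -
  interpret clique_extension V E K x
    using assms by unfold_locales
  show ?thesis
    using partition_by_Px[OF assms(2,4)] .
qed

end
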